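(* Assume $W$ satisfies (h) and (h* ) as in the context. The set \[ C:=\Big\{c>0:\ \text{there exists } L\ge1 \text{ with } \inf_{V\in\mathcal{X}_L}E_c(V)<0\Big\} \] is open and non-empty, and $\sup C\le \sqrt{2W^-(a^-)}\,/\,d_0$, where $d_0:=\lim_{\alpha\to0^+}\mathrm{dist}\big(\mathcal{C}^-_\alpha,\overline{\mathbb{B}}(a^+,r_0)\big)$.
   Context: $W\in C^2_{\mathrm{loc}}(\mathbb{R}^N)$, $W^-:=\max\{-W,0\}$. Hypothesis (h* ): $a^\pm$ are minima, $W(a^-)<0=W(a^+)$, $\min W=W(a^-)$; there is $\alpha_0>0$ such that for every $\alpha\in(0,\alpha_0]$, $W^{-1}(\{\alpha\})=\partial\mathcal{C}^-_\alpha\cup\partial\mathcal{C}^+_\alpha$, $\{W\le\alpha\}=\mathcal{C}^-_\alpha\cup\mathcal{C}^+_\alpha$, with $\mathcal{C}^\pm_\alpha$ disjoint compact convex sets with $C^2$ boundaries containing $a^\pm$; with $\mathcal{C}^-_0$ the component of $\{W\le0\}$ containing $a^-$ and $n$ its outward normal, $\nabla W\cdot n\ge c_0>0$ and $D^2W\ge c_0I$ on $\partial\mathcal{C}^-_0$; and $r\mapsto W(a^-+r\xi)$ has strictly positive derivative for $r>0$ while $a^-+r\xi\in\mathcal{C}^-_{\alpha_0}$, $|\xi|=1$. Hypothesis (h): there is $R_0>0$ with $\frac{d}{dr}W(a^\pm+r\xi)>0$ for $r\in(0,R_0)$, $|\xi|=1$. $r_0\in(0,R_0)$ with $W\ge0$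 on $\{|u-a^+|\le r_0\}$, $W<0$ on $\{|u-a^-|\le r_0\}$. $E_c(U):=\int_{\mathbb{R}}(\tfrac12|U_x|^2+W(U))e^{cx}dx$; $\mathcal{X}_L:=\{U\in[H^1_{\mathrm{loc}}(\mathbb{R})]^N: |U(x)-a^+|\le r_0\ (x\ge L),\ |U(x)-a^-|\le r_0\ (x\le-L)\}$. *)

theory Defs
  imports "HOL-Analysis.Analysis"
begin

definition grad :: "('a::euclidean_space \<Rightarrow> real) \<Rightarrow> 'a \<Rightarrow> 'a" where
  "grad f x = (\<Sum>i\<in>Basis. frechet_derivative f (at x) i *\<^sub>R i)"

definition hess :: "('a::euclidean_space \<Rightarrow> real) \<Rightarrow> 'a \<Rightarrow> 'a \<Rightarrow> 'a" where
  "hess f x = frechet_derivative (grad f) (at x)"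

definition C2 :: "('a::euclidean_space \<Rightarrow> real) \<Rightarrow> bool" where
  "C2 f \<longleftrightarrow> (\<forall>x. f differentiable (at x)) \<and> (\<forall>x. grad f differentiable (at x))
            \<and> (\<forall>v. continuous_on UNIV (\<lambda>x. hess f x v))"

definition C2_boundary :: "'a::euclidean_space set \<Rightarrow> bool" where
  "C2_boundary S \<longleftrightarrow> (\<forall>p\<in>frontier S. \<exists>r>0. \<exists>g. C2 g \<and> grad g p \<noteq> 0 \<and>
      S \<inter> ball p r = {u \<in> ball p r. g u \<le> 0})"

definition outward_normal :: "'a::euclidean_space set \<Rightarrow> 'a \<Rightarrow> 'a \<Rightarrow> bool" where
  "outward_normal S p n \<longleftrightarrow> p \<in> frontier S \<and> norm n = 1 \<and> (\<forall>q\<in>S. n \<bullet> (q - p) \<le> 0)"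

definition negpart :: "real \<Rightarrow> real" where
  "negpart t = max (- t) 0"

text \<open>H^1_loc(R; R^N), represented by a continuous representative U together with its
  (weak) derivative U': U is locally absolutely continuous with locally square-integrable
  derivative U'.\<close>
definition H1loc :: "(real \<Rightarrow> 'a::euclidean_space) \<Rightarrow> (real \<Rightarrow> 'a) \<Rightarrow> bool" where
  "H1loc U U' \<longleftrightarrow> (\<forall>a b. U' absolutely_integrable_on {a..b}
      \<and> (\<lambda>t. (norm (U' t))\<^sup>2) integrable_on {a..b}
      \<and> (a \<le> b \<longrightarrow> (U' has_integral (U b - U a)) {a..b}))"

text \<open>The energy E_c(U) = \<integral> (1/2 |U_x|^2 + W(U)) e^{cx} dx, as an extended real
  (positive part minus negative part of the integrand).\<close>
definition energy :: "('a::euclidean_space \<Rightarrow> real) \<Rightarrow> real \<Rightarrow> (real \<Rightarrow> 'a) \<Rightarrow> (real \<Rightarrow> 'a) \<Rightarrow> ereal" where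
  "energy W c U U' =
     (let f = (\<lambda>x. ((1/2) * (norm (U' x))\<^sup>2 + W (U x)) * exp (c * x)) in
      enn2ereal (\<integral>\<^sup>+ x. ennreal (max 0 (f x)) \<partial>lborel)
      - enn2ereal (\<integral>\<^sup>+ x. ennreal (max 0 (- f x)) \<partial>lborel))"

definition XL :: "'a::euclidean_space \<Rightarrow> 'a \<Rightarrow> real \<Rightarrow> real \<Rightarrow> (real \<Rightarrow> 'a) set" where
  "XL am ap r0 L = {U. (\<forall>x\<ge>L. norm (U x - ap) \<le> r0) \<and> (\<forall>x\<le>-L. norm (U x - am) \<le> r0)}"

definition inf_energy :: "('a::euclidean_space \<Rightarrow> real) \<Rightarrow> 'a \<Rightarrow> 'a \<Rightarrow> real \<Rightarrow> real \<Rightarrow> real \<Rightarrow> ereal" where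
  "inf_energy W am ap r0 c L =
     Inf {energy W c V V' | V V'. H1loc V V' \<and> V \<in> XL am ap r0 L}"

end

theory Submission
  imports Defs
begin

text \<open>
  A path of negative energy for some speed: the ramp from am to ap on [0,1] has bounded energy
  there, while resting in the deeper well am on the half-line x < 0 contributes about W am / c,
  which tends to -\<infinity> as c tends to 0.

  Openness: if V has negative energy for the speed c, then V(\<mu> x) has energy (\<mu>^2 K + P) / \<mu>
  for the speed \<mu> c, where K and P are the kinetic and potential parts of the energy of V;
  this depends continuously on \<mu>.

  Upper bound: the set Cm \<alpha> contains every point where W is negative, and its distance to the
  ball around ap is d \<alpha>, which increases to d0 as \<alpha> decreases to 0.  After its last visit x0 to
  Cm \<alpha>, a path in X_L has to cover the distance d \<alpha>, which by AM-GM costs kinetic energy at least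
  c e^{c x0} (d \<alpha>)^2 / 2, while all of its negative energy, at most W^-(am) e^{c x0} / c, is spent
  before x0.  So the energy is nonnegative as soon as c d \<alpha> \<ge> sqrt (2 W^-(am)).
\<close>

section \<open>Radial monotonicity of the potential\<close>

lemma C2_imp_differentiable: "C2 W \<Longrightarrow> W differentiable (at x)"
  unfolding C2_def by blast

lemma C2_imp_continuous: "C2 W \<Longrightarrow> continuous_on UNIV W"
  by (meson C2_imp_differentiable differentiable_at_imp_differentiable_on
      differentiable_imp_continuous_on)

lemma increasing_along_ray:
  fixes W :: "'a::real_normed_vector \<Rightarrow> real"
  assumes diff: "\<And>x. W differentiable (at x)" and r: "0 < r"
    and deriv_pos: "\<And>s. 0 < s \<Longrightarrow> s < r \<Longrightarrow> deriv (\<lambda>s. W (a + s *\<^sub>R \<xi>)) s > 0"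
  shows "W a < W (a + r *\<^sub>R \<xi>)"
proof -
  define \<phi> where "\<phi> s = W (a + s *\<^sub>R \<xi>)" for s
  have \<phi>_diff: "\<phi> differentiable (at s)" for s
    unfolding \<phi>_def
    by (rule differentiable_compose[of W, unfolded o_def, OF diff]) (intro derivative_intros)
  then have "continuous_on {0..r} \<phi>"
    by (simp add: differentiable_at_imp_differentiable_on differentiable_imp_continuous_on)
  then obtain l z where z: "0 < z" "z < r" "DERIV \<phi> z :> l" "\<phi> r - \<phi> 0 = (r - 0) * l"
    using MVT[OF r] \<phi>_diff by blast
  have "l = deriv \<phi> z"
    using z(3) by (simp add: DERIV_imp_deriv)
  also have "deriv \<phi> z > 0"
    using deriv_pos z(1,2) unfolding \<phi>_def by blast
  finally have "\<phi> 0 < \<phi> r"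
    using z(4) r by (smt (verit) mult_pos_pos)
  then show ?thesis
    unfolding \<phi>_def by simp
qed

lemma sphere_lower_bound_gt_centre:
  fixes W :: "'a::euclidean_space \<Rightarrow> real"
  assumes diff: "\<And>x. W differentiable (at x)" and r: "0 < r" "r < R"
    and deriv_pos: "\<And>\<xi> s. norm \<xi> = 1 \<Longrightarrow> 0 < s \<Longrightarrow> s < R \<Longrightarrow> deriv (\<lambda>s. W (a + s *\<^sub>R \<xi>)) s > 0"
  shows "\<exists>m > W a. \<forall>u\<in>sphere a r. m \<le> W u"
proof -
  have gt: "W a < W u" if "u \<in> sphere a r" for u
  proof -
    define \<xi> where "\<xi> = (1/r) *\<^sub>R (u - a)"
    have \<xi>: "norm \<xi> = 1"
      using that r unfolding \<xi>_def by (simp add: dist_norm norm_minus_commute)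
    have "deriv (\<lambda>s. W (a + s *\<^sub>R \<xi>)) s > 0" if "0 < s" "s < r" for s
      using that r(2) by (intro deriv_pos[OF \<xi>]) auto
    then have "W a < W (a + r *\<^sub>R \<xi>)"
      by (rule increasing_along_ray[OF diff r(1)])
    moreover have "a + r *\<^sub>R \<xi> = u"
      using r unfolding \<xi>_def by simp
    ultimately show ?thesis
      by simp
  qed
  have "continuous_on (sphere a r) W"
    by (intro continuous_at_imp_continuous_on ballI differentiable_imp_continuous_within diff)
  moreover have "sphere a r \<noteq> {}"
    using r by simp
  ultimately obtain u where u: "u \<in> sphere a r" "\<forall>v\<in>sphere a r. W u \<le> W v"
    using continuous_attains_inf[OF compact_sphere] by blast
  show ?thesis
    using gt[OF u(1)] u(2) by blast
qed

section \<open>The sublevel sets around the wells\<close>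

lemma connected_meets_sphere:
  fixes S :: "'a::euclidean_space set"
  assumes "connected S" "x \<in> S" "dist a x \<le> r" "y \<in> S" "r < dist a y"
  shows "\<exists>v\<in>S. dist a v = r"
proof -
  have "S \<inter> frontier (cball a r) \<noteq> {}"
    by (rule connected_Int_frontier) (use assms in auto)
  then show ?thesis
    by auto
qed

lemma antimono_tendsto_Sup_at_right_0:
  fixes g :: "real \<Rightarrow> real"
  assumes "\<alpha>0 > 0" and antimono: "\<And>a b. 0 < a \<Longrightarrow> a \<le> b \<Longrightarrow> b \<le> \<alpha>0 \<Longrightarrow> g b \<le> g a"
    and bdd: "bdd_above (g ` {0<..\<alpha>0})"
  shows "(g \<longlongrightarrow> Sup (g ` {0<..\<alpha>0})) (at_right 0)"
proof (rule order_tendstoI)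
  fix y assume "y < Sup (g ` {0<..\<alpha>0})"
  then obtain x where x: "x \<in> {0<..\<alpha>0}" "y < g x"
    using less_cSup_iff[OF _ bdd] \<open>\<alpha>0 > 0\<close> by auto
  have "y < g t" if "0 < t" "t < x" for t
    using antimono[of t x] x that by force
  then show "eventually (\<lambda>t. y < g t) (at_right 0)"
    using x by (auto simp: eventually_at_right_field)
next
  fix y assume y: "Sup (g ` {0<..\<alpha>0}) < y"
  have "g t < y" if "0 < t" "t < \<alpha>0" for t
    using cSup_upper[OF _ bdd, of "g t"] y that by force
  then show "eventually (\<lambda>t. g t < y) (at_right 0)"
    using \<open>\<alpha>0 > 0\<close> by (auto simp: eventually_at_right_field)
qed

text \<open>Only the parts of hypothesis (h*) on the sublevel sets that the argument uses.\<close>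
locale well_sublevels =
  fixes W :: "'a::euclidean_space \<Rightarrow> real" and am ap :: 'a
    and Cm Cp :: "real \<Rightarrow> 'a set" and \<alpha>0 :: real
  assumes sublevel_eq_union: "\<And>\<alpha>. 0 < \<alpha> \<Longrightarrow> \<alpha> \<le> \<alpha>0 \<Longrightarrow> {u. W u \<le> \<alpha>} = Cm \<alpha> \<union> Cp \<alpha>"
    and Cm_Cp_disjoint: "\<And>\<alpha>. 0 < \<alpha> \<Longrightarrow> \<alpha> \<le> \<alpha>0 \<Longrightarrow> Cm \<alpha> \<inter> Cp \<alpha> = {}"
    and Cm_Cp_compact: "\<And>\<alpha>. 0 < \<alpha> \<Longrightarrow> \<alpha> \<le> \<alpha>0 \<Longrightarrow> compact (Cm \<alpha>) \<and> compact (Cp \<alpha>)"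
    and Cm_Cp_convex: "\<And>\<alpha>. 0 < \<alpha> \<Longrightarrow> \<alpha> \<le> \<alpha>0 \<Longrightarrow> convex (Cm \<alpha>) \<and> convex (Cp \<alpha>)"
    and wells_mem: "\<And>\<alpha>. 0 < \<alpha> \<Longrightarrow> \<alpha> \<le> \<alpha>0 \<Longrightarrow> am \<in> Cm \<alpha> \<and> ap \<in> Cp \<alpha>"
begin

lemma Cm_mono:
  assumes "0 < \<alpha>" "\<alpha> \<le> \<beta>" "\<beta> \<le> \<alpha>0"
  shows "Cm \<alpha> \<subseteq> Cm \<beta>"
proof (rule ccontr)
  have \<beta>: "0 < \<beta>"
    using assms by linarith
  have "Cm \<alpha> \<subseteq> {u. W u \<le> \<alpha>}"
    using sublevel_eq_union[OF assms(1) order_trans[OF assms(2,3)]] by blast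
  also have "\<dots> \<subseteq> Cm \<beta> \<union> Cp \<beta>"
    using sublevel_eq_union[OF \<beta> assms(3)] assms(2) by auto
  finally have sub: "Cm \<alpha> \<subseteq> Cm \<beta> \<union> Cp \<beta>" .
  assume "\<not> Cm \<alpha> \<subseteq> Cm \<beta>"
  then have "Cp \<beta> \<inter> Cm \<alpha> \<noteq> {}"
    using sub by blast
  moreover have "Cm \<beta> \<inter> Cm \<alpha> \<noteq> {}"
    using wells_mem[OF assms(1) order_trans[OF assms(2,3)]] wells_mem[OF \<beta> assms(3)] by blast
  moreover have "closed (Cm \<beta>)" "closed (Cp \<beta>)"
    using Cm_Cp_compact[OF \<beta> assms(3)] compact_imp_closed by blast+
  moreover have "connected (Cm \<alpha>)"
    using Cm_Cp_convex[OF assms(1) order_trans[OF assms(2,3)]] convex_connected by blast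
  ultimately show False
    using sub Cm_Cp_disjoint[OF \<beta> assms(3)] unfolding connected_closed by blast
qed

lemma am_in_Cm: "0 < \<alpha> \<Longrightarrow> \<alpha> \<le> \<alpha>0 \<Longrightarrow> am \<in> Cm \<alpha>"
  using wells_mem by blast

end

locale separated_wells = well_sublevels +
  fixes r0 m :: real
  assumes r0_nonneg: "0 \<le> r0" and m_pos: "m > 0" and sphere_bound: "\<And>u. u \<in> sphere ap r0 \<Longrightarrow> m \<le> W u"
    and nonneg_near_ap: "\<And>u. u \<in> cball ap r0 \<Longrightarrow> W u \<ge> 0" and W_am: "W am < 0"
begin

lemma am_notin_cball: "dist ap am > r0"
  using nonneg_near_ap[of am] W_am by (metis linorder_not_le mem_cball)

lemma Cm_cball_disjoint:
  assumes "0 < \<alpha>" "\<alpha> \<le> \<alpha>0" "\<alpha> < m"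
  shows "Cm \<alpha> \<inter> cball ap r0 = {}"
proof (rule ccontr)
  assume "Cm \<alpha> \<inter> cball ap r0 \<noteq> {}"
  then obtain x where "x \<in> Cm \<alpha>" "dist ap x \<le> r0"
    by auto
  moreover have "connected (Cm \<alpha>)"
    using Cm_Cp_convex[OF assms(1,2)] convex_connected by blast
  ultimately obtain v where "v \<in> Cm \<alpha>" "dist ap v = r0"
    using connected_meets_sphere am_in_Cm[OF assms(1,2)] am_notin_cball by meson
  then have "W v \<le> \<alpha>" "m \<le> W v"
    using sublevel_eq_union[OF assms(1,2)] sphere_bound[of v] by (blast, simp)
  with assms show False
    by linarith
qed

lemma negative_subset_Cm:
  assumes "W u < 0" "0 < \<alpha>" "\<alpha> \<le> \<alpha>0"
  shows "u \<in> Cm \<alpha>"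
proof -
  define \<beta> where "\<beta> = min \<alpha> (m/2)"
  have \<beta>: "0 < \<beta>" "\<beta> \<le> \<alpha>" "\<beta> \<le> \<alpha>0" "\<beta> < m"
    using assms m_pos by (auto simp: \<beta>_def)
  have "u \<notin> Cp \<beta>"
  proof
    assume "u \<in> Cp \<beta>"
    moreover have "connected (Cp \<beta>)" "ap \<in> Cp \<beta>"
      using Cm_Cp_convex[OF \<beta>(1,3)] wells_mem[OF \<beta>(1,3)] convex_connected by blast+
    moreover have "r0 < dist ap u"
      using nonneg_near_ap[of u] assms(1) by (metis linorder_not_le mem_cball)
    moreover have "dist ap ap \<le> r0"
      using r0_nonneg by simp
    ultimately obtain v where "v \<in> Cp \<beta>" "dist ap v = r0"
      using connected_meets_sphere[of "Cp \<beta>" ap ap r0 u] by blast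
    then have "W v \<le> \<beta>" "m \<le> W v"
      using sublevel_eq_union[OF \<beta>(1,3)] sphere_bound[of v] by (blast, simp)
    with \<beta> show False
      by linarith
  qed
  moreover have "u \<in> Cm \<beta> \<union> Cp \<beta>"
    using sublevel_eq_union[OF \<beta>(1,3)] assms(1) \<beta>(1) by force
  ultimately have "u \<in> Cm \<beta>"
    by blast
  then show ?thesis
    using Cm_mono[OF \<beta>(1,2) assms(3)] by blast
qed


lemma setdist_Cm_cball_pos:
  assumes "0 < \<alpha>" "\<alpha> \<le> \<alpha>0" "\<alpha> < m"
  shows "setdist (Cm \<alpha>) (cball ap r0) > 0"
proof -
  have "setdist (Cm \<alpha>) (cball ap r0) \<noteq> 0"
    using setdist_eq_0_compact_closed[of "Cm \<alpha>" "cball ap r0"] Cm_Cp_compact[OF assms(1,2)]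
      Cm_cball_disjoint[OF assms] am_in_Cm[OF assms(1,2)] r0_nonneg by auto
  then show ?thesis
    using setdist_pos_le by (metis order_le_less)
qed

lemma setdist_Cm_cball_antimono:
  assumes "0 < \<alpha>" "\<alpha> \<le> \<beta>" "\<beta> \<le> \<alpha>0"
  shows "setdist (Cm \<beta>) (cball ap r0) \<le> setdist (Cm \<alpha>) (cball ap r0)"
  by (rule setdist_subset_left)
    (use Cm_mono[OF assms] am_in_Cm[OF assms(1) order_trans[OF assms(2,3)]] in auto)

lemma setdist_Cm_cball_le: "0 < \<alpha> \<Longrightarrow> \<alpha> \<le> \<alpha>0 \<Longrightarrow> setdist (Cm \<alpha>) (cball ap r0) \<le> dist am ap"
  by (rule setdist_le_dist) (use am_in_Cm r0_nonneg in auto)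

lemma tendsto_setdist_Cm_cball:
  assumes "\<alpha>0 > 0"
  defines "D \<equiv> Sup ((\<lambda>\<alpha>. setdist (Cm \<alpha>) (cball ap r0)) ` {0<..\<alpha>0})"
  shows "((\<lambda>\<alpha>. setdist (Cm \<alpha>) (cball ap r0)) \<longlongrightarrow> D) (at_right 0)" and "D > 0"
    and "\<And>d. d < D \<Longrightarrow> \<exists>\<alpha>\<in>{0<..\<alpha>0}. \<alpha> < m \<and> d < setdist (Cm \<alpha>) (cball ap r0)"
proof -
  let ?g = "\<lambda>\<alpha>. setdist (Cm \<alpha>) (cball ap r0)"
  have bdd: "bdd_above (?g ` {0<..\<alpha>0})"
    using setdist_Cm_cball_le by (auto intro!: bdd_aboveI)
  show "(?g \<longlongrightarrow> D) (at_right 0)"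
    unfolding D_def by (rule antimono_tendsto_Sup_at_right_0[OF assms(1) setdist_Cm_cball_antimono bdd])
  define \<alpha>1 where "\<alpha>1 = min \<alpha>0 (m/2)"
  have \<alpha>1: "0 < \<alpha>1" "\<alpha>1 \<le> \<alpha>0" "\<alpha>1 < m"
    using assms(1) m_pos by (auto simp: \<alpha>1_def)
  have "0 < ?g \<alpha>1"
    by (rule setdist_Cm_cball_pos[OF \<alpha>1])
  also have "?g \<alpha>1 \<le> D"
    unfolding D_def using \<alpha>1 bdd by (intro cSup_upper) auto
  finally show "D > 0" .
  fix d assume "d < D"
  then obtain \<alpha>2 where \<alpha>2: "\<alpha>2 \<in> {0<..\<alpha>0}" "d < ?g \<alpha>2"
    unfolding D_def using less_cSup_iff[OF _ bdd] assms(1) by auto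
  then have "0 < min \<alpha>2 \<alpha>1" "min \<alpha>2 \<alpha>1 \<le> \<alpha>2"
    using \<alpha>1 by auto
  then have "d < ?g (min \<alpha>2 \<alpha>1)"
    using setdist_Cm_cball_antimono[of "min \<alpha>2 \<alpha>1" \<alpha>2] \<alpha>2 by force
  then show "\<exists>\<alpha>\<in>{0<..\<alpha>0}. \<alpha> < m \<and> d < ?g \<alpha>"
    using \<alpha>1 \<open>0 < min \<alpha>2 \<alpha>1\<close> by (intro bexI[of _ "min \<alpha>2 \<alpha>1"]) auto
qed

end

section \<open>Paths of class H1_loc\<close>

lemma H1loc_continuous:
  fixes V :: "real \<Rightarrow> 'a::euclidean_space"
  assumes H: "H1loc V V'"
  shows "continuous_on UNIV V"
proof -
  have "continuous_on {a..b} V" if "a < b" for a b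
  proof -
    have "V' integrable_on {a..b}"
      using H unfolding H1loc_def absolutely_integrable_on_def by blast
    then have "continuous_on {a..b} (\<lambda>x. V a + integral {a..x} V')"
      by (intro continuous_on_add continuous_on_const indefinite_integral_continuous_1)
    moreover have "V a + integral {a..x} V' = V x" if "x \<in> {a..b}" for x
    proof -
      have "(V' has_integral (V x - V a)) {a..x}"
        using H that unfolding H1loc_def by simp
      then show ?thesis
        by (simp add: integral_unique)
    qed
    ultimately show ?thesis
      using continuous_on_eq by blast
  qed
  then have "continuous (at x) V" for x
    using continuous_on_interior[of "{x-1..x+1}" V x] by simp
  then show ?thesis
    by (simp add: continuous_at_imp_continuous_on)
qed

lemma H1loc_derivative_measurable:
  fixes V :: "real \<Rightarrow> 'a::euclidean_space"
  assumes H: "H1loc V V'"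
  shows "V' \<in> borel_measurable lebesgue"
proof (rule borel_measurable_LIMSEQ_metric)
  fix n :: nat
  have "V' integrable_on {-real n..real n}"
    using H unfolding H1loc_def absolutely_integrable_on_def by blast
  then have "V' \<in> borel_measurable (lebesgue_on {-real n..real n})"
    by (rule integrable_imp_measurable)
  then show "(\<lambda>x. indicator {-real n..real n} x *\<^sub>R V' x) \<in> borel_measurable lebesgue"
    by (subst (asm) borel_measurable_restrict_space_iff) auto
next
  fix x :: real
  obtain N :: nat where "\<bar>x\<bar> \<le> real N"
    using real_arch_simple by blast
  then have "\<forall>n\<ge>N. indicator {-real n..real n} x *\<^sub>R V' x = V' x"
    by (auto simp: indicator_def)
  then show "(\<lambda>n. indicator {-real n..real n} x *\<^sub>R V' x) \<longlonglongrightarrow> V' x"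
    by (intro tendsto_eventually) (auto simp: eventually_sequentially)
qed

lemma has_integral_stretch_interval:
  fixes g :: "real \<Rightarrow> 'b::real_normed_vector"
  assumes \<mu>: "\<mu> > 0" and g: "(g has_integral I) {\<mu>*a..\<mu>*b}"
  shows "((\<lambda>x. g (\<mu>*x)) has_integral (1/\<mu>) *\<^sub>R I) {a..b}"
proof -
  have "(\<lambda>x. x / \<mu>) ` {\<mu>*a..\<mu>*b} = {a..b}"
  proof
    show "{a..b} \<subseteq> (\<lambda>x. x / \<mu>) ` {\<mu>*a..\<mu>*b}"
    proof
      fix x assume "x \<in> {a..b}"
      then have "\<mu>*x \<in> {\<mu>*a..\<mu>*b}" "x = (\<mu>*x)/\<mu>"
        using \<mu> by (auto intro: mult_left_mono)
      then show "x \<in> (\<lambda>x. x / \<mu>) ` {\<mu>*a..\<mu>*b}"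
        by blast
    qed
  qed (use \<mu> in \<open>auto simp: field_simps\<close>)
  then show ?thesis
    using has_integral_stretch_real[OF g, of \<mu>] \<mu> by simp
qed

lemma integrable_stretch_interval:
  fixes g :: "real \<Rightarrow> 'b::real_normed_vector"
  shows "\<mu> > 0 \<Longrightarrow> g integrable_on {\<mu>*a..\<mu>*b} \<Longrightarrow> (\<lambda>x. g (\<mu>*x)) integrable_on {a..b}"
  using has_integral_stretch_interval by blast

lemma H1loc_rescale:
  fixes V V' :: "real \<Rightarrow> 'a::euclidean_space"
  assumes \<mu>: "\<mu> > 0" and H: "H1loc V V'"
  shows "H1loc (\<lambda>x. V (\<mu>*x)) (\<lambda>x. \<mu> *\<^sub>R V' (\<mu>*x))"
  unfolding H1loc_def
proof (intro allI conjI impI)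
  fix a b :: real
  have V': "V' integrable_on {\<mu>*a..\<mu>*b}" "(\<lambda>x. norm (V' x)) integrable_on {\<mu>*a..\<mu>*b}"
      "(\<lambda>x. (norm (V' x))\<^sup>2) integrable_on {\<mu>*a..\<mu>*b}"
    using H unfolding H1loc_def absolutely_integrable_on_def by blast+
  have "(\<lambda>x. \<mu> *\<^sub>R V' (\<mu>*x)) integrable_on {a..b}"
    by (rule integrable_cmul[OF integrable_stretch_interval[OF \<mu> V'(1)]])
  moreover have "(\<lambda>x. \<mu> *\<^sub>R norm (V' (\<mu>*x))) integrable_on {a..b}"
    by (rule integrable_cmul[OF integrable_stretch_interval[OF \<mu> V'(2)]])
  ultimately show "(\<lambda>x. \<mu> *\<^sub>R V' (\<mu>*x)) absolutely_integrable_on {a..b}"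
    using \<mu> unfolding absolutely_integrable_on_def by simp
  have "(\<lambda>x. \<mu>^2 *\<^sub>R (norm (V' (\<mu>*x)))\<^sup>2) integrable_on {a..b}"
    by (rule integrable_cmul[OF integrable_stretch_interval[OF \<mu> V'(3)]])
  then show "(\<lambda>x. (norm (\<mu> *\<^sub>R V' (\<mu>*x)))\<^sup>2) integrable_on {a..b}"
    using \<mu> by (simp add: power_mult_distrib)
  assume "a \<le> b"
  then have "(V' has_integral (V (\<mu>*b) - V (\<mu>*a))) {\<mu>*a..\<mu>*b}"
    using H \<mu> unfolding H1loc_def by simp
  from has_integral_cmul[OF has_integral_stretch_interval[OF \<mu> this], of \<mu>]
  show "((\<lambda>x. \<mu> *\<^sub>R V' (\<mu>*x)) has_integral (V (\<mu>*b) - V (\<mu>*a))) {a..b}"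
    using \<mu> by simp
qed

lemma XL_mono: "L \<le> L' \<Longrightarrow> XL am ap r0 L \<subseteq> XL am ap r0 L'"
  unfolding XL_def by auto

lemma XL_rescale:
  assumes "\<mu> > 0" "V \<in> XL am ap r0 L"
  shows "(\<lambda>x. V (\<mu>*x)) \<in> XL am ap r0 (L/\<mu>)"
proof -
  have "L \<le> \<mu> * x" if "L/\<mu> \<le> x" for x
    using that assms(1) by (simp add: field_simps)
  moreover have "\<mu> * x \<le> -L" if "x \<le> -(L/\<mu>)" for x
    using that assms(1) by (simp add: field_simps)
  ultimately show ?thesis
    using assms(2) unfolding XL_def by auto
qed

section \<open>Lower bounds for the energy\<close>

definition energy_density ::
    "('a::euclidean_space \<Rightarrow> real) \<Rightarrow> real \<Rightarrow> (real \<Rightarrow> 'a) \<Rightarrow> (real \<Rightarrow> 'a) \<Rightarrow> real \<Rightarrow> real" where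
  "energy_density W c U U' x = ((1/2) * (norm (U' x))\<^sup>2 + W (U x)) * exp (c * x)"

lemma energy_eq_parts:
  "energy W c U U' =
     enn2ereal (\<integral>\<^sup>+x. ennreal (max 0 (energy_density W c U U' x)) \<partial>lborel)
     - enn2ereal (\<integral>\<^sup>+x. ennreal (max 0 (- energy_density W c U U' x)) \<partial>lborel)"
  by (simp add: energy_def energy_density_def Let_def)

lemma enn2ereal_diff_nonneg:
  fixes X Y :: ennreal
  assumes "X < top" "X \<le> Y"
  shows "0 \<le> enn2ereal Y - enn2ereal X"
proof -
  obtain x where "X = ennreal x" "0 \<le> x"
    using assms(1) by (cases X) auto
  then show ?thesis
    using assms(2) by (cases Y) (auto simp: ennreal_le_iff)
qed

lemma enn2ereal_diff_neg:
  fixes X Y :: ennreal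
  assumes "X \<le> ennreal a" "ennreal b \<le> Y" "0 \<le> a" "a < b"
  shows "enn2ereal X - enn2ereal Y < 0"
proof -
  obtain x where x: "X = ennreal x" "0 \<le> x" "x \<le> a"
    using assms(1,3) by (cases X) (auto simp: ennreal_le_iff top_unique)
  show ?thesis
  proof (cases Y)
    case (real y)
    then show ?thesis
      using x assms(2-4) by (simp add: ennreal_le_iff)
  qed (use x in simp)
qed

lemma energy_eq_integral:
  assumes "integrable lebesgue (energy_density W c U U')"
  shows "energy W c U U' = ereal (\<integral>x. energy_density W c U U' x \<partial>lebesgue)"
proof -
  let ?\<rho> = "energy_density W c U U'"
  define P where "P = (\<integral>\<^sup>+x. ennreal (?\<rho> x) \<partial>lebesgue)"
  define N where "N = (\<integral>\<^sup>+x. ennreal (- ?\<rho> x) \<partial>lebesgue)"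
  have max0: "ennreal (max 0 t) = ennreal t" for t :: real
    by (simp add: max_def ennreal_neg)
  have "P \<noteq> top" "N \<noteq> top"
    using assms unfolding real_integrable_def P_def N_def by auto
  then obtain p n where p: "P = ennreal p" "0 \<le> p" and n: "N = ennreal n" "0 \<le> n"
    by (cases P; cases N) auto
  have "energy W c U U' = enn2ereal P - enn2ereal N"
    unfolding energy_eq_parts P_def N_def max0 nn_integral_completion ..
  also have "\<dots> = ereal (enn2real P - enn2real N)"
    using p n by simp
  also have "enn2real P - enn2real N = (\<integral>x. ?\<rho> x \<partial>lebesgue)"
    unfolding P_def N_def by (rule real_lebesgue_integral_def[OF assms, symmetric])
  finally show ?thesis .
qed

lemma nn_integral_exp_Iic:
  fixes c A :: real
  assumes c: "c > 0" and A: "A \<ge> 0"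
  shows "(\<integral>\<^sup>+x. ennreal (A * exp (c*x)) * indicator {..x0} x \<partial>lborel) = ennreal (A * exp (c*x0) / c)"
proof -
  have "(\<integral>\<^sup>+x. ennreal (exp (c*x)) * indicator {..x0} x \<partial>lborel)
      = (\<integral>\<^sup>+x. ennreal (exp (c * (0 + (-1) * x))) * indicator {..x0} (0 + (-1) * x) \<partial>lborel)"
    by (subst nn_integral_real_affine[where c = "-1" and t = 0]) auto
  also have "\<dots> = (\<integral>\<^sup>+x. ennreal (exp (- c * x)) * indicator {-x0..} x \<partial>lborel)"
    by (intro nn_integral_cong) (auto simp: indicator_def)
  also have "\<dots> = ennreal (exp (- c * (-x0)) / c)"
    by (rule nn_integral_has_integral_lebesgue')
      (use has_integral_exp_minus_to_infinity[OF c, of "-x0"] in auto)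
  finally have "(\<integral>\<^sup>+x. ennreal (exp (c*x)) * indicator {..x0} x \<partial>lborel) = ennreal (exp (c*x0) / c)"
    by simp
  moreover have "(\<integral>\<^sup>+x. ennreal (A * exp (c*x)) * indicator {..x0} x \<partial>lborel)
      = ennreal A * (\<integral>\<^sup>+x. ennreal (exp (c*x)) * indicator {..x0} x \<partial>lborel)"
    using A by (subst nn_integral_cmult[symmetric]) (auto simp: ennreal_mult mult.assoc)
  ultimately show ?thesis
    using A c by (simp add: ennreal_mult[symmetric])
qed

lemma nn_integral_neg_potential_le:
  fixes W :: "'a::euclidean_space \<Rightarrow> real"
  assumes c: "c > 0" and W_min: "\<forall>u. W am \<le> W u"
    and nonneg: "\<And>x. \<tau> < x \<Longrightarrow> 0 \<le> W (V x)" and g: "\<And>x. W (V x) * exp (c*x) \<le> g x"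
  shows "(\<integral>\<^sup>+x. ennreal (max 0 (- g x)) \<partial>lborel) \<le> ennreal (negpart (W am) * exp (c*\<tau>) / c)"
proof -
  define A where "A = negpart (W am)"
  have A: "0 \<le> A" "\<And>u. - W u \<le> A"
    using W_min unfolding A_def negpart_def by (simp, smt (verit))
  have "ennreal (max 0 (- g x)) \<le> ennreal (A * exp (c*x)) * indicator {..\<tau>} x" for x
  proof (cases "x \<le> \<tau>")
    case True
    have "- g x \<le> - W (V x) * exp (c*x)"
      using g[of x] by simp
    also have "\<dots> \<le> A * exp (c*x)"
      using mult_right_mono[OF A(2)[of "V x"], of "exp (c*x)"] by simp
    finally show ?thesis
      using A(1) True by (simp add: ennreal_leI)
  next
    case False
    then have "0 \<le> g x"
      using nonneg[of x] g[of x] by (meson exp_ge_zero mult_nonneg_nonneg not_le order_trans)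
    then show ?thesis
      by simp
  qed
  then have "(\<integral>\<^sup>+x. ennreal (max 0 (- g x)) \<partial>lborel)
      \<le> (\<integral>\<^sup>+x. ennreal (A * exp (c*x)) * indicator {..\<tau>} x \<partial>lborel)"
    by (rule nn_integral_mono)
  also have "\<dots> = ennreal (A * exp (c*\<tau>) / c)"
    by (rule nn_integral_exp_Iic[OF c A(1)])
  finally show ?thesis
    unfolding A_def .
qed

lemma amgm_bound:
  fixes n t e :: real
  assumes t: "t > 0" and e: "e > 0"
  shows "n \<le> t * ((1/2) * n\<^sup>2 * e) + 1 / (2 * t * e)"
proof -
  have "2 * t * e * n \<le> (t * e * n)\<^sup>2 + 1"
    using zero_le_power2[of "t * e * n - 1"] by (simp add: power2_eq_square algebra_simps)
  also have "\<dots> = 2 * t * e * (t * ((1/2) * n\<^sup>2 * e) + 1 / (2 * t * e))"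
    using t e by (simp add: field_simps power2_eq_square)
  finally show ?thesis
    using t e by simp
qed

lemma kinetic_density_integrable:
  fixes V' :: "real \<Rightarrow> 'a::euclidean_space"
  assumes "H1loc V V'"
  shows "(\<lambda>x. (1/2) * (norm (V' x))\<^sup>2 * exp (c*x)) integrable_on {a..b}"
proof -
  have "(\<lambda>x. exp (c*x) * ((1/2) * (norm (V' x))\<^sup>2)) absolutely_integrable_on {a..b}"
  proof (rule absolutely_integrable_bounded_measurable_product_real)
    have "continuous_on {a..b} (\<lambda>x. exp (c*x))"
      by (intro continuous_intros)
    then show "(\<lambda>x. exp (c*x)) \<in> borel_measurable (lebesgue_on {a..b})"
      and "bounded ((\<lambda>x. exp (c*x)) ` {a..b})"
      by (auto intro: continuous_imp_measurable_on_sets_lebesgue compact_imp_bounded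
          compact_continuous_image)
    have "(\<lambda>x. (norm (V' x))\<^sup>2) integrable_on {a..b}"
      using assms unfolding H1loc_def by blast
    then have "(\<lambda>x. (1/2) * (norm (V' x))\<^sup>2) integrable_on {a..b}"
      by (rule integrable_on_mult_right)
    then show "(\<lambda>x. (1/2) * (norm (V' x))\<^sup>2) absolutely_integrable_on {a..b}"
      by (rule nonnegative_absolutely_integrable_1) simp
  qed simp
  then show ?thesis
    unfolding absolutely_integrable_on_def by (simp add: mult_ac)
qed

text \<open>Integrating the pointwise AM-GM bound on the speed against the weight of the energy.\<close>
lemma H1loc_increment_le:
  fixes V V' :: "real \<Rightarrow> 'a::euclidean_space"
  assumes H: "H1loc V V'" and x0: "x0 \<le> L" and c: "c > 0" and t: "t > 0"
  shows "norm (V L - V x0)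
    \<le> t * integral {x0..L} (\<lambda>x. (1/2) * (norm (V' x))\<^sup>2 * exp (c*x)) + exp (- c * x0) / (2 * t * c)"
proof -
  define p where "p x = (1/2) * (norm (V' x))\<^sup>2 * exp (c*x)" for x
  define q where "q x = t * p x + 1 / (2 * t) * exp (- c * x)" for x
  have p: "p integrable_on {x0..L}"
    unfolding p_def by (rule kinetic_density_integrable[OF H])
  have "((\<lambda>x. exp (- c * x)) has_integral (exp (-c*L)/(-c) - exp (-c*x0)/(-c))) {x0..L}"
  proof (rule fundamental_theorem_of_calculus[OF x0])
    fix x assume "x \<in> {x0..L}"
    show "((\<lambda>x. exp (-c*x)/(-c)) has_vector_derivative exp (- c * x)) (at x within {x0..L})"
      using c by (auto intro!: derivative_eq_intros
          simp: has_real_derivative_iff_has_vector_derivative[symmetric])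
  qed
  then have q: "(q has_integral t * integral {x0..L} p + 1 / (2 * t) * (exp (-c*L)/(-c) - exp (-c*x0)/(-c))) {x0..L}"
    unfolding q_def by (intro has_integral_add has_integral_mult_right integrable_integral p)
  have V': "(V' has_integral (V L - V x0)) {x0..L}"
    using H x0 unfolding H1loc_def by blast
  have "norm (V' x) \<le> q x" for x
    using amgm_bound[OF t, of "exp (c*x)" "norm (V' x)"]
    by (simp add: p_def q_def exp_minus field_simps)
  then have "norm (integral {x0..L} V') \<le> integral {x0..L} q"
    using V' q by (intro integral_norm_bound_integral) auto
  then have "norm (V L - V x0)
      \<le> t * integral {x0..L} p + 1 / (2 * t) * (exp (-c*L)/(-c) - exp (-c*x0)/(-c))"
    using V' q by (simp add: integral_unique)
  also have "\<dots> \<le> t * integral {x0..L} p + exp (- c * x0) / (2 * t * c)"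
    using c t by (simp add: field_simps)
  finally show ?thesis
    unfolding p_def .
qed

lemma kinetic_energy_lower_bound:
  fixes V V' :: "real \<Rightarrow> 'a::euclidean_space"
  assumes H: "H1loc V V'" and x0: "x0 \<le> L" and c: "c > 0"
  shows "c * exp (c*x0) * (norm (V L - V x0))\<^sup>2 / 2
    \<le> integral {x0..L} (\<lambda>x. (1/2) * (norm (V' x))\<^sup>2 * exp (c*x))"
proof (cases "V L = V x0")
  case True
  have "0 \<le> integral {x0..L} (\<lambda>x. (1/2) * (norm (V' x))\<^sup>2 * exp (c*x))"
    by (rule integral_nonneg[OF kinetic_density_integrable[OF H]]) simp
  with True show ?thesis
    by simp
next
  case False
  define P where "P = integral {x0..L} (\<lambda>x. (1/2) * (norm (V' x))\<^sup>2 * exp (c*x))"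
  define d where "d = norm (V L - V x0)"
  define E where "E = exp (- c * x0) / c"
  have d: "d > 0" and E: "E > 0"
    using False c by (auto simp: d_def E_def)
  have "d \<le> (E/d) * P + exp (- c * x0) / (2 * (E/d) * c)"
    unfolding d_def P_def by (rule H1loc_increment_le[OF H x0 c]) (use d E in \<open>simp add: d_def\<close>)
  also have "exp (- c * x0) / (2 * (E/d) * c) = d/2"
    using c d by (simp add: E_def field_simps)
  finally have "d * d / 2 \<le> E * P"
    using d by (simp add: field_simps)
  then have "c * exp (c*x0) * (d * d / 2) \<le> c * exp (c*x0) * (E * P)"
    using c by (intro mult_left_mono) auto
  also have "c * exp (c*x0) * (E * P) = P"
    using c by (simp add: E_def exp_minus field_simps)
  finally show ?thesis
    by (simp add: P_def d_def power2_eq_square)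
qed

lemma last_negative_time:
  fixes V :: "real \<Rightarrow> 'a::euclidean_space" and W :: "'a \<Rightarrow> real"
  assumes V: "continuous_on UNIV V" and K: "closed K" "\<And>u. W u < 0 \<Longrightarrow> u \<in> K"
    and after_L: "\<And>x. L \<le> x \<Longrightarrow> 0 \<le> W (V x)" and neg: "W (V x1) < 0"
  obtains x0 where "x0 \<le> L" "V x0 \<in> K" "\<And>x. x0 < x \<Longrightarrow> 0 \<le> W (V x)"
proof
  define S where "S = {x. W (V x) < 0}"
  have S_less: "x < L" if "x \<in> S" for x
    using after_L[of x] that unfolding S_def by force
  have S: "S \<noteq> {}" "bdd_above S"
    using neg S_less unfolding S_def by (auto intro!: bdd_aboveI less_imp_le)
  show "Sup S \<le> L"
    using S S_less by (meson cSup_least less_imp_le)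
  have "closed (V -` K)"
    using continuous_closed_vimage[OF K(1)] V continuous_on_eq_continuous_at by blast
  moreover have "S \<subseteq> V -` K"
    using K(2) unfolding S_def by auto
  ultimately show "V (Sup S) \<in> K"
    using closure_contains_Sup[OF S] closure_minimal by blast
  show "0 \<le> W (V x)" if "Sup S < x" for x
    using cSup_upper[OF _ S(2), of x] that unfolding S_def by force
qed

lemma nn_integral_pos_part_ge_kinetic:
  fixes V V' :: "real \<Rightarrow> 'a::euclidean_space"
  assumes H: "H1loc V V'" and x0: "x0 \<le> L" and nonneg: "\<And>x. x0 < x \<Longrightarrow> 0 \<le> W (V x)"
  shows "ennreal (integral {x0..L} (\<lambda>x. (1/2) * (norm (V' x))\<^sup>2 * exp (c*x)))
    \<le> (\<integral>\<^sup>+x. ennreal (max 0 (energy_density W c V V' x)) \<partial>lborel)"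
proof -
  define p where "p x = (1/2) * (norm (V' x))\<^sup>2 * exp (c*x)" for x
  have "p integrable_on {x0..L}"
    unfolding p_def by (rule kinetic_density_integrable[OF H])
  then have "(\<integral>\<^sup>+x. ennreal (p x) * indicator {x0..L} x \<partial>lborel) = ennreal (integral {x0..L} p)"
    by (intro nn_integral_has_integral_lebesgue' integrable_integral) (simp add: p_def)
  moreover have "(\<integral>\<^sup>+x. ennreal (p x) * indicator {x0..L} x \<partial>lborel)
      \<le> (\<integral>\<^sup>+x. ennreal (max 0 (energy_density W c V V' x)) \<partial>lborel)"
  proof (rule nn_integral_mono_AE)
    show "AE x in lborel. ennreal (p x) * indicator {x0..L} x
        \<le> ennreal (max 0 (energy_density W c V V' x))"
      using AE_lborel_singleton[of x0]
    proof eventually_elim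
      fix x :: real assume "x \<noteq> x0"
      show "ennreal (p x) * indicator {x0..L} x \<le> ennreal (max 0 (energy_density W c V V' x))"
      proof (cases "x \<in> {x0..L}")
        case True
        then have "0 \<le> W (V x)"
          using nonneg \<open>x \<noteq> x0\<close> by auto
        then have "p x \<le> energy_density W c V V' x"
          unfolding p_def energy_density_def by (simp add: algebra_simps)
        then show ?thesis
          using True by (simp add: ennreal_leI)
      qed simp
    qed
  qed
  ultimately show ?thesis
    unfolding p_def by simp
qed

lemma exp_weighted_le_of_sqrt_le:
  fixes A c D :: real
  assumes c: "c > 0" and le: "sqrt (2 * A) \<le> c * D"
  shows "A * exp (c*x) / c \<le> c * exp (c*x) * D\<^sup>2 / 2"
proof -
  have "2 * A \<le> (c * D)\<^sup>2"
    using le by (rule sqrt_le_D)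
  then have "A \<le> c * c * D * D / 2"
    by (simp add: power2_eq_square algebra_simps)
  then have "A / c \<le> c * D * D / 2"
    using c by (simp add: field_simps)
  then have "A / c * exp (c*x) \<le> c * D * D / 2 * exp (c*x)"
    by (rule mult_right_mono) simp
  then show ?thesis
    by (simp add: power2_eq_square mult_ac)
qed

lemma energy_nonneg_if_fast:
  fixes W :: "'a::euclidean_space \<Rightarrow> real" and V V' :: "real \<Rightarrow> 'a"
  assumes H: "H1loc V V'" and X: "V \<in> XL am ap r0 L" and c: "c > 0"
    and W_min: "\<forall>u. W am \<le> W u" and nonneg_near_ap: "\<forall>u\<in>cball ap r0. W u \<ge> 0"
    and K: "closed K" "\<And>u. W u < 0 \<Longrightarrow> u \<in> K"
    and dist_K: "\<And>u v. u \<in> K \<Longrightarrow> v \<in> cball ap r0 \<Longrightarrow> d \<le> dist u v"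
    and speed: "sqrt (2 * negpart (W am)) \<le> c * d"
  shows "energy W c V V' \<ge> 0"
proof -
  define P where "P = (\<integral>\<^sup>+x. ennreal (max 0 (energy_density W c V V' x)) \<partial>lborel)"
  define N where "N = (\<integral>\<^sup>+x. ennreal (max 0 (- energy_density W c V V' x)) \<partial>lborel)"
  define A where "A = negpart (W am)"
  have near_ap: "V x \<in> cball ap r0" if "L \<le> x" for x
    using X that unfolding XL_def by (simp add: dist_norm norm_minus_commute)
  have "N \<le> P \<and> N < top"
  proof (cases "\<exists>x1. W (V x1) < 0")
    case False
    then have "0 \<le> energy_density W c V V' x" for x
      by (simp add: energy_density_def not_less)
    then show ?thesis
      by (simp add: N_def)
  next
    case True
    then obtain x1 where "W (V x1) < 0"
      by blast
    moreover have "0 \<le> W (V x)" if "L \<le> x" for x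
      using near_ap[OF that] nonneg_near_ap by blast
    ultimately obtain x0 where x0: "x0 \<le> L" "V x0 \<in> K" "\<And>x. x0 < x \<Longrightarrow> 0 \<le> W (V x)"
      using last_negative_time[OF H1loc_continuous[OF H] K] by metis
    define D where "D = norm (V L - V x0)"
    have "d \<le> D"
      using dist_K[OF x0(2) near_ap[OF order_refl]] by (simp add: D_def dist_norm norm_minus_commute)
    then have "sqrt (2 * A) \<le> c * D"
      using speed c unfolding A_def by (meson mult_left_mono less_imp_le order_trans)
    then have A_le: "A * exp (c*x0) / c \<le> c * exp (c*x0) * D\<^sup>2 / 2"
      by (rule exp_weighted_le_of_sqrt_le[OF c])
    have "W (V x) * exp (c*x) \<le> energy_density W c V V' x" for x
      unfolding energy_density_def by (intro mult_right_mono) auto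
    from nn_integral_neg_potential_le[OF c W_min x0(3) this]
    have N_le: "N \<le> ennreal (A * exp (c*x0) / c)"
      unfolding N_def A_def .
    also have "\<dots> \<le> ennreal (integral {x0..L} (\<lambda>x. (1/2) * (norm (V' x))\<^sup>2 * exp (c*x)))"
      using A_le kinetic_energy_lower_bound[OF H x0(1) c] by (intro ennreal_leI) (simp add: D_def)
    also have "\<dots> \<le> P"
      unfolding P_def by (rule nn_integral_pos_part_ge_kinetic[where W = W, OF H x0(1,3)])
    finally show ?thesis
      using N_le by (simp add: top.not_eq_extremum order_le_less_trans)
  qed
  then show ?thesis
    unfolding energy_eq_parts P_def[symmetric] N_def[symmetric]
    using enn2ereal_diff_nonneg by blast
qed

section \<open>A path of negative energy\<close>

definition ramp :: "'a::real_vector \<Rightarrow> 'a \<Rightarrow> real \<Rightarrow> 'a" where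
  "ramp a b x = a + max 0 (min 1 x) *\<^sub>R (b - a)"

definition ramp_deriv :: "'a::real_vector \<Rightarrow> 'a \<Rightarrow> real \<Rightarrow> 'a" where
  "ramp_deriv a b x = (if x \<in> {0..1} then b - a else 0)"

lemma has_integral_indicator_unit_interval:
  fixes k :: "'b::banach"
  shows "((\<lambda>x::real. if x \<in> {0..1} then k else 0)
    has_integral (Henstock_Kurzweil_Integration.content {max 0 s..min 1 t} *\<^sub>R k)) {s..t}"
proof -
  have "((\<lambda>x. k) has_integral (Henstock_Kurzweil_Integration.content {max 0 s..min 1 t} *\<^sub>R k))
      ({0..1} \<inter> {s..t})"
    using has_integral_const_real[of k "max 0 s" "min 1 t"] by simp
  then show ?thesis
    by (subst has_integral_restrict_Int)
qed

lemma H1loc_ramp: "H1loc (ramp a b) (ramp_deriv a b)"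
  unfolding H1loc_def
proof (intro allI conjI impI)
  fix s t :: real
  have norm_eq: "(\<lambda>x. norm (ramp_deriv a b x)) = (\<lambda>x. if x \<in> {0..1} then norm (b - a) else 0)"
    and norm2_eq: "(\<lambda>x. (norm (ramp_deriv a b x))\<^sup>2) = (\<lambda>x. if x \<in> {0..1} then (norm (b - a))\<^sup>2 else 0)"
    by (auto simp: ramp_deriv_def)
  have "ramp_deriv a b integrable_on {s..t}"
    unfolding ramp_deriv_def using has_integral_indicator_unit_interval by blast
  moreover have "(\<lambda>x. norm (ramp_deriv a b x)) integrable_on {s..t}"
    unfolding norm_eq using has_integral_indicator_unit_interval by blast
  ultimately show "ramp_deriv a b absolutely_integrable_on {s..t}"
    by (simp add: absolutely_integrable_on_def)
  show "(\<lambda>x. (norm (ramp_deriv a b x))\<^sup>2) integrable_on {s..t}"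
    unfolding norm2_eq using has_integral_indicator_unit_interval by blast
  assume "s \<le> t"
  then have "Henstock_Kurzweil_Integration.content {max 0 s..min 1 t}
      = max 0 (min 1 t) - max 0 (min 1 s)"
    by (auto simp: max_def min_def)
  then have "ramp a b t - ramp a b s
      = Henstock_Kurzweil_Integration.content {max 0 s..min 1 t} *\<^sub>R (b - a)"
    by (simp add: ramp_def scaleR_diff_left)
  then show "(ramp_deriv a b has_integral (ramp a b t - ramp a b s)) {s..t}"
    unfolding ramp_deriv_def using has_integral_indicator_unit_interval by metis
qed

lemma ramp_in_XL: "r0 \<ge> 0 \<Longrightarrow> ramp am ap \<in> XL am ap r0 1"
  unfolding XL_def ramp_def by auto

lemma ramp_energy_bounds:
  fixes W :: "'a::euclidean_space \<Rightarrow> real"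
  assumes W_am: "W am < 0" and W_ap: "W ap = 0" and c: "0 < c" "c \<le> 1"
    and B: "\<And>x. x \<in> {0..1} \<Longrightarrow> W (ramp am ap x) \<le> B"
  defines "K \<equiv> max 0 ((1/2) * (norm (ap - am))\<^sup>2 + B)"
    and "\<rho> \<equiv> energy_density W c (ramp am ap) (ramp_deriv am ap)"
  shows "(\<integral>\<^sup>+x. ennreal (max 0 (\<rho> x)) \<partial>lborel) \<le> ennreal (K * exp 1)"
    and "ennreal (- W am * exp (-1) * (1/c)) \<le> (\<integral>\<^sup>+x. ennreal (max 0 (- \<rho> x)) \<partial>lborel)"
proof -
  have K: "K \<ge> 0"
    by (simp add: K_def)
  have outside: "ramp am ap x = am \<and> ramp_deriv am ap x = 0" if "x < 0" for x
    using that by (simp add: ramp_def ramp_deriv_def)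
  have "ennreal (max 0 (\<rho> x)) \<le> ennreal (K * exp 1) * indicator {0..1} x" for x
  proof (cases "x \<in> {0..1}")
    case True
    have "\<rho> x \<le> K * exp (c * x)"
      unfolding \<rho>_def energy_density_def K_def
      using B[OF True] True by (intro mult_right_mono) (auto simp: ramp_deriv_def le_max_iff_disj)
    also have "\<dots> \<le> K * exp 1"
      using K True c by (intro mult_left_mono) (auto simp: mult_le_one)
    finally show ?thesis
      using True K by (simp add: ennreal_leI)
  next
    case False
    then have "\<rho> x \<le> 0"
    proof (cases "x < 0")
      case False
      then have "ramp am ap x = ap" "ramp_deriv am ap x = 0"
        using \<open>x \<notin> {0..1}\<close> by (auto simp: ramp_def ramp_deriv_def)
      then show ?thesis
        using W_ap by (simp add: \<rho>_def energy_density_def)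
    qed (use outside W_am in \<open>simp add: \<rho>_def energy_density_def mult_nonpos_nonneg\<close>)
    then show ?thesis
      by simp
  qed
  then have "(\<integral>\<^sup>+x. ennreal (max 0 (\<rho> x)) \<partial>lborel)
      \<le> (\<integral>\<^sup>+x. ennreal (K * exp 1) * indicator {0..1::real} x \<partial>lborel)"
    by (intro nn_integral_mono) blast
  then show "(\<integral>\<^sup>+x. ennreal (max 0 (\<rho> x)) \<partial>lborel) \<le> ennreal (K * exp 1)"
    by (simp add: nn_integral_cmult_indicator)
  have "ennreal (- W am * exp (-1)) * indicator {-1/c..<0} x \<le> ennreal (max 0 (- \<rho> x))" for x
  proof (cases "x \<in> {-1/c..<0}")
    case True
    then have "- \<rho> x = - W am * exp (c * x)"
      using outside by (simp add: \<rho>_def energy_density_def)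
    moreover have "-1 \<le> c * x"
      using True c by (simp add: field_simps)
    then have "- W am * exp (-1) \<le> - W am * exp (c * x)"
      using W_am by (intro mult_left_mono) auto
    ultimately show ?thesis
      using True by (simp add: ennreal_leI)
  qed simp
  then have "(\<integral>\<^sup>+x. ennreal (- W am * exp (-1)) * indicator {-1/c..<0::real} x \<partial>lborel)
      \<le> (\<integral>\<^sup>+x. ennreal (max 0 (- \<rho> x)) \<partial>lborel)"
    by (rule nn_integral_mono)
  moreover have "(\<integral>\<^sup>+x. ennreal (- W am * exp (-1)) * indicator {-1/c..<0::real} x \<partial>lborel)
      = ennreal (- W am * exp (-1)) * ennreal (1/c)"
    using c by (simp add: nn_integral_cmult_indicator)
  also have "\<dots> = ennreal (- W am * exp (-1) * (1/c))"
    using c mult_nonpos_nonneg[OF less_imp_le[OF W_am], of "exp (-1)"]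
    by (intro ennreal_mult[symmetric]) auto
  ultimately show "ennreal (- W am * exp (-1) * (1/c)) \<le> (\<integral>\<^sup>+x. ennreal (max 0 (- \<rho> x)) \<partial>lborel)"
    by simp
qed

lemma exists_negative_energy:
  fixes W :: "'a::euclidean_space \<Rightarrow> real"
  assumes W: "continuous_on UNIV W" and W_am: "W am < 0" and W_ap: "W ap = 0" and r0: "r0 \<ge> 0"
  shows "\<exists>c>0. inf_energy W am ap r0 c 1 < 0"
proof -
  have "continuous_on {0..1} (\<lambda>x. W (ramp am ap x))"
    unfolding ramp_def by (intro continuous_on_compose2[OF W] continuous_intros) auto
  then obtain B where B: "\<And>x. x \<in> {0..1} \<Longrightarrow> W (ramp am ap x) \<le> B"
    using compact_attains_sup[OF compact_continuous_image, of "{0..1::real}"] by fastforce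
  define K where "K = max 0 ((1/2) * (norm (ap - am))\<^sup>2 + B)"
  define A where "A = - W am"
  define c where "c = A / (K * exp 2 + A)"
  have A: "A > 0" and K: "K \<ge> 0"
    using W_am by (auto simp: A_def K_def)
  then have c: "0 < c" "c \<le> 1"
    by (auto simp: c_def add_nonneg_pos)
  have "A * exp (-1) * (1/c) = (K * exp 2 + A) * exp (-1)"
    using A K by (simp add: c_def add_nonneg_pos)
  also have "\<dots> = K * exp 1 + A * exp (-1)"
    by (simp add: algebra_simps exp_add[symmetric])
  finally have "K * exp 1 < A * exp (-1) * (1/c)"
    using A by simp
  then have "energy W c (ramp am ap) (ramp_deriv am ap) < 0"
    unfolding energy_eq_parts
    by (intro enn2ereal_diff_neg[OF ramp_energy_bounds[OF W_am W_ap c B]])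
      (use K in \<open>simp_all add: K_def A_def\<close>)
  moreover have "inf_energy W am ap r0 c 1 \<le> energy W c (ramp am ap) (ramp_deriv am ap)"
    unfolding inf_energy_def using H1loc_ramp ramp_in_XL[OF r0] by (intro Inf_lower) blast
  ultimately show ?thesis
    using c by (meson le_less_trans)
qed

section \<open>Openness by rescaling\<close>

lemma energy_parts_measurable:
  fixes W :: "'a::euclidean_space \<Rightarrow> real" and V V' :: "real \<Rightarrow> 'a"
  assumes H: "H1loc V V'" and W: "continuous_on UNIV W"
  shows "(\<lambda>x. (1/2) * (norm (V' x))\<^sup>2 * exp (c*x)) \<in> borel_measurable lebesgue"
    and "(\<lambda>x. W (V x) * exp (c*x)) \<in> borel_measurable lebesgue"
proof -
  have [measurable]: "V' \<in> borel_measurable lebesgue"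
    by (rule H1loc_derivative_measurable[OF H])
  have "(\<lambda>x. W (V x)) \<in> borel_measurable borel"
    by (intro borel_measurable_continuous_onI continuous_on_compose2[OF W H1loc_continuous[OF H]]) auto
  then have [measurable]: "(\<lambda>x. W (V x)) \<in> borel_measurable lebesgue"
    by (intro measurable_completion) simp
  have [measurable]: "(\<lambda>x::real. x) \<in> borel_measurable lebesgue"
    by (intro measurable_completion) simp
  show "(\<lambda>x. (1/2) * (norm (V' x))\<^sup>2 * exp (c*x)) \<in> borel_measurable lebesgue"
    by measurable
  show "(\<lambda>x. W (V x) * exp (c*x)) \<in> borel_measurable lebesgue"
    by measurable
qed

lemma energy_pos_part_finite_if_neg:
  assumes N: "(\<integral>\<^sup>+x. ennreal (max 0 (- energy_density W c U U' x)) \<partial>lborel) < top"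
    and neg: "energy W c U U' < 0"
  shows "(\<integral>\<^sup>+x. ennreal (max 0 (energy_density W c U U' x)) \<partial>lborel) < top"
proof -
  have "\<not> (\<integral>\<^sup>+x. ennreal (max 0 (- energy_density W c U U' x)) \<partial>lborel)
      \<le> (\<integral>\<^sup>+x. ennreal (max 0 (energy_density W c U U' x)) \<partial>lborel)"
  proof
    assume "(\<integral>\<^sup>+x. ennreal (max 0 (- energy_density W c U U' x)) \<partial>lborel)
      \<le> (\<integral>\<^sup>+x. ennreal (max 0 (energy_density W c U U' x)) \<partial>lborel)"
    from enn2ereal_diff_nonneg[OF N this] have "0 \<le> energy W c U U'"
      unfolding energy_eq_parts .
    with neg show False
      by simp
  qed
  then show ?thesis
    using N by (simp add: not_le order_less_trans)
qed

lemma integrable_energy_parts_if_negative: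
  fixes W :: "'a::euclidean_space \<Rightarrow> real" and V V' :: "real \<Rightarrow> 'a"
  assumes H: "H1loc V V'" and W: "continuous_on UNIV W" and c: "c > 0"
    and W_min: "\<forall>u. W am \<le> W u" and after_L: "\<And>x. L \<le> x \<Longrightarrow> 0 \<le> W (V x)"
    and neg: "energy W c V V' < 0"
  shows "integrable lebesgue (\<lambda>x. (1/2) * (norm (V' x))\<^sup>2 * exp (c*x))"
    and "integrable lebesgue (\<lambda>x. W (V x) * exp (c*x))"
proof -
  define p where "p x = (1/2) * (norm (V' x))\<^sup>2 * exp (c*x)" for x
  define w where "w x = W (V x) * exp (c*x)" for x
  define \<rho> where "\<rho> = energy_density W c V V'"
  have \<rho>: "\<rho> x = p x + w x" for x
    by (simp add: \<rho>_def energy_density_def p_def w_def algebra_simps)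
  have p_meas[measurable]: "p \<in> borel_measurable lebesgue"
    and w_meas[measurable]: "w \<in> borel_measurable lebesgue"
    using energy_parts_measurable[OF H W] by (simp_all add: p_def[abs_def] w_def[abs_def])
  have "\<rho> = (\<lambda>x. p x + w x)"
    using \<rho> by (rule ext)
  then have [measurable]: "\<rho> \<in> borel_measurable lebesgue"
    by (simp only:) measurable
  have "\<And>x. L < x \<Longrightarrow> 0 \<le> W (V x)" "\<And>x. W (V x) * exp (c*x) \<le> w x"
    using after_L by (auto simp: w_def)
  from nn_integral_neg_potential_le[where V = V and \<tau> = L and g = w, OF c W_min this]
  have Nw: "(\<integral>\<^sup>+x. ennreal (max 0 (- w x)) \<partial>lborel) < top"
    by (simp add: order_le_less_trans)
  have p_nonneg: "0 \<le> p x" for x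
    by (simp add: p_def)
  have "max 0 (- \<rho> x) \<le> max 0 (- w x)" for x
    using p_nonneg[of x] by (auto simp: \<rho> max_def)
  then have "(\<integral>\<^sup>+x. ennreal (max 0 (- \<rho> x)) \<partial>lborel) \<le> (\<integral>\<^sup>+x. ennreal (max 0 (- w x)) \<partial>lborel)"
    by (intro nn_integral_mono ennreal_leI)
  then have N: "(\<integral>\<^sup>+x. ennreal (max 0 (- \<rho> x)) \<partial>lborel) < top"
    using Nw by (simp add: order_le_less_trans)
  have P: "(\<integral>\<^sup>+x. ennreal (max 0 (\<rho> x)) \<partial>lborel) < top"
    using energy_pos_part_finite_if_neg[OF N[unfolded \<rho>_def] neg] unfolding \<rho>_def .
  have "ennreal (norm (p x)) \<le> ennreal (max 0 (\<rho> x)) + ennreal (max 0 (- w x))" for x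
  proof -
    have "norm (p x) \<le> max 0 (\<rho> x) + max 0 (- w x)"
      using p_nonneg[of x] by (auto simp: \<rho> max_def)
    then have "ennreal (norm (p x)) \<le> ennreal (max 0 (\<rho> x) + max 0 (- w x))"
      by (rule ennreal_leI)
    also have "\<dots> = ennreal (max 0 (\<rho> x)) + ennreal (max 0 (- w x))"
      by (rule ennreal_plus) auto
    finally show ?thesis .
  qed
  then have "(\<integral>\<^sup>+x. ennreal (norm (p x)) \<partial>lebesgue)
      \<le> (\<integral>\<^sup>+x. ennreal (max 0 (\<rho> x)) + ennreal (max 0 (- w x)) \<partial>lebesgue)"
    by (intro nn_integral_mono)
  also have "\<dots> = (\<integral>\<^sup>+x. ennreal (max 0 (\<rho> x)) \<partial>lebesgue) + (\<integral>\<^sup>+x. ennreal (max 0 (- w x)) \<partial>lebesgue)"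
    by (rule nn_integral_add) measurable
  also have "\<dots> = (\<integral>\<^sup>+x. ennreal (max 0 (\<rho> x)) \<partial>lborel) + (\<integral>\<^sup>+x. ennreal (max 0 (- w x)) \<partial>lborel)"
    by (simp only: nn_integral_completion)
  finally show "integrable lebesgue p"
    using P Nw p_meas by (auto simp: integrable_iff_bounded ennreal_add_less_top order_le_less_trans)
  have "w x \<le> max 0 (\<rho> x)" for x
    using p_nonneg[of x] by (auto simp: \<rho> max_def)
  then have "(\<integral>\<^sup>+x. ennreal (w x) \<partial>lebesgue) \<le> (\<integral>\<^sup>+x. ennreal (max 0 (\<rho> x)) \<partial>lborel)"
    unfolding nn_integral_completion by (intro nn_integral_mono ennreal_leI)
  moreover have "(\<integral>\<^sup>+x. ennreal (- w x) \<partial>lebesgue) \<le> (\<integral>\<^sup>+x. ennreal (max 0 (- w x)) \<partial>lborel)"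
    unfolding nn_integral_completion by (intro nn_integral_mono ennreal_leI) simp
  ultimately show "integrable lebesgue w"
    using P Nw w_meas by (auto simp: real_integrable_def top_unique)
qed

lemma energy_rescale:
  fixes W :: "'a::euclidean_space \<Rightarrow> real" and V V' :: "real \<Rightarrow> 'a"
  assumes \<mu>: "\<mu> > 0"
    and p: "integrable lebesgue (\<lambda>x. (1/2) * (norm (V' x))\<^sup>2 * exp (c*x))"
    and w: "integrable lebesgue (\<lambda>x. W (V x) * exp (c*x))"
  shows "energy W (\<mu>*c) (\<lambda>x. V (\<mu>*x)) (\<lambda>x. \<mu> *\<^sub>R V' (\<mu>*x))
    = ereal ((\<mu>\<^sup>2 * (\<integral>x. (1/2) * (norm (V' x))\<^sup>2 * exp (c*x) \<partial>lebesgue)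
             + (\<integral>x. W (V x) * exp (c*x) \<partial>lebesgue)) / \<mu>)"
proof -
  define F where "F = (\<lambda>y. \<mu>\<^sup>2 * ((1/2) * (norm (V' y))\<^sup>2 * exp (c*y)) + W (V y) * exp (c*y))"
  have F: "integrable lebesgue F"
    unfolding F_def by (rule Bochner_Integration.integrable_add[OF integrable_mult_right[OF p] w])
  have density: "energy_density W (\<mu>*c) (\<lambda>x. V (\<mu>*x)) (\<lambda>x. \<mu> *\<^sub>R V' (\<mu>*x)) = (\<lambda>x. F (0 + \<mu>*x))"
    using \<mu> by (auto simp: F_def energy_density_def algebra_simps power_mult_distrib)
  have "integrable lebesgue (\<lambda>x. F (0 + \<mu>*x))"
    using lebesgue_integrable_real_affine[OF F, of \<mu> 0] \<mu> by simp
  then have "energy W (\<mu>*c) (\<lambda>x. V (\<mu>*x)) (\<lambda>x. \<mu> *\<^sub>R V' (\<mu>*x)) = ereal (\<integral>x. F (0 + \<mu>*x) \<partial>lebesgue)"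
    using energy_eq_integral[of W "\<mu>*c" "\<lambda>x. V (\<mu>*x)" "\<lambda>x. \<mu> *\<^sub>R V' (\<mu>*x)"] unfolding density by simp
  also have "(\<integral>x. F (0 + \<mu>*x) \<partial>lebesgue) = (\<integral>x. F x \<partial>lebesgue) / \<mu>"
    using lebesgue_integral_real_affine[of \<mu> F 0] \<mu> by simp
  also have "(\<integral>x. F x \<partial>lebesgue) = \<mu>\<^sup>2 * (\<integral>x. (1/2) * (norm (V' x))\<^sup>2 * exp (c*x) \<partial>lebesgue)
      + (\<integral>x. W (V x) * exp (c*x) \<partial>lebesgue)"
    unfolding F_def Bochner_Integration.integral_add[OF integrable_mult_right[OF p] w]
    by (rule arg_cong[OF integral_mult_right_zero])
  finally show ?thesis .
qed

lemma eventually_rescaled_energy_neg: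
  fixes W :: "'a::euclidean_space \<Rightarrow> real" and V V' :: "real \<Rightarrow> 'a"
  assumes H: "H1loc V V'" and W: "continuous_on UNIV W" and c: "c > 0"
    and W_min: "\<forall>u. W am \<le> W u" and after_L: "\<And>x. L \<le> x \<Longrightarrow> 0 \<le> W (V x)"
    and neg: "energy W c V V' < 0"
  shows "\<forall>\<^sub>F \<mu> in nhds 1. 0 < \<mu> \<and> energy W (\<mu>*c) (\<lambda>x. V (\<mu>*x)) (\<lambda>x. \<mu> *\<^sub>R V' (\<mu>*x)) < 0"
proof -
  note parts = integrable_energy_parts_if_negative[OF H W c W_min after_L neg]
  define K where "K = (\<integral>x. (1/2) * (norm (V' x))\<^sup>2 * exp (c*x) \<partial>lebesgue)"
  define P where "P = (\<integral>x. W (V x) * exp (c*x) \<partial>lebesgue)"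
  have "energy W c V V' = ereal ((1\<^sup>2 * K + P) / 1)"
    using energy_rescale[OF _ parts, of 1] by (simp add: K_def P_def)
  then have "(1\<^sup>2 * K + P) / 1 < 0"
    using neg by simp
  moreover have "((\<lambda>\<mu>. (\<mu>\<^sup>2 * K + P) / \<mu>) \<longlongrightarrow> (1\<^sup>2 * K + P) / 1) (nhds 1)"
    by (intro tendsto_intros filterlim_ident) auto
  ultimately have "\<forall>\<^sub>F \<mu> in nhds 1. (\<mu>\<^sup>2 * K + P) / \<mu> < 0"
    by (rule order_tendstoD(2)[rotated])
  moreover have "\<forall>\<^sub>F \<mu> in nhds 1. 0 < (\<mu>::real)"
    using eventually_nhds_in_open[OF open_greaterThan[of "0::real"], of "1::real"] by simp
  ultimately show ?thesis
  proof eventually_elim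
    case (elim \<mu>)
    then show ?case
      using energy_rescale[OF _ parts, of \<mu>] by (simp add: K_def P_def)
  qed
qed

lemma eventually_inf_energy_neg:
  fixes W :: "'a::euclidean_space \<Rightarrow> real"
  assumes W: "continuous_on UNIV W" and c: "c > 0" and W_min: "\<forall>u. W am \<le> W u"
    and nonneg_near_ap: "\<forall>u\<in>cball ap r0. W u \<ge> 0" and neg: "inf_energy W am ap r0 c L < 0"
  shows "\<forall>\<^sub>F c' in nhds c. 0 < c' \<and> (\<exists>L'\<ge>1. inf_energy W am ap r0 c' L' < 0)"
proof -
  obtain V V' where H: "H1loc V V'" and X: "V \<in> XL am ap r0 L" and "energy W c V V' < 0"
    using neg unfolding inf_energy_def Inf_less_iff by blast
  moreover have "0 \<le> W (V x)" if "L \<le> x" for x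
    using X that nonneg_near_ap unfolding XL_def by (simp add: dist_norm norm_minus_commute)
  ultimately have rescaled: "\<forall>\<^sub>F \<mu> in nhds 1.
      0 < \<mu> \<and> energy W (\<mu>*c) (\<lambda>x. V (\<mu>*x)) (\<lambda>x. \<mu> *\<^sub>R V' (\<mu>*x)) < 0"
    using eventually_rescaled_energy_neg[OF _ W c W_min] by blast
  have "((\<lambda>c'. c'/c) \<longlongrightarrow> c/c) (nhds c)"
    using c by (intro tendsto_intros filterlim_ident) auto
  then have "filterlim (\<lambda>c'. c'/c) (nhds 1) (nhds c)"
    using c by simp
  from eventually_compose_filterlim[OF rescaled this]
  show ?thesis
  proof eventually_elim
    case (elim c')
    define \<mu> where "\<mu> = c'/c"
    have \<mu>: "0 < \<mu>" "\<mu> * c = c'"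
      using elim c by (auto simp: \<mu>_def)
    have "(\<lambda>x. V (\<mu>*x)) \<in> XL am ap r0 (max 1 (L/\<mu>))"
      using XL_rescale[OF \<mu>(1) X] XL_mono[of "L/\<mu>" "max 1 (L/\<mu>)"] by auto
    then have "inf_energy W am ap r0 c' (max 1 (L/\<mu>))
        \<le> energy W c' (\<lambda>x. V (\<mu>*x)) (\<lambda>x. \<mu> *\<^sub>R V' (\<mu>*x))"
      unfolding inf_energy_def using H1loc_rescale[OF \<mu>(1) H] by (intro Inf_lower) blast
    also have "\<dots> < 0"
      using elim \<mu> by (simp add: \<mu>_def)
    finally show ?case
      using \<mu> c by (intro conjI exI[of _ "max 1 (L/\<mu>)"]) (auto simp: zero_less_mult_iff)
  qed
qed

lemma open_if_eventually_mem:
  assumes "\<And>x. x \<in> S \<Longrightarrow> \<forall>\<^sub>F y in nhds x. y \<in> S"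
  shows "open S"
proof (subst open_subopen, intro ballI)
  fix x assume "x \<in> S"
  then show "\<exists>T. open T \<and> x \<in> T \<and> T \<subseteq> S"
    using assms[of x] unfolding eventually_nhds by blast
qed

lemma (in separated_wells) speed_le_if_inf_energy_neg:
  assumes W_min: "\<forall>u. W am \<le> W u" and \<alpha>0: "\<alpha>0 > 0" and c: "c > 0"
    and neg: "inf_energy W am ap r0 c L < 0"
  shows "c \<le> sqrt (2 * negpart (W am)) / Sup ((\<lambda>\<alpha>. setdist (Cm \<alpha>) (cball ap r0)) ` {0<..\<alpha>0})"
proof (rule ccontr)
  define D where "D = Sup ((\<lambda>\<alpha>. setdist (Cm \<alpha>) (cball ap r0)) ` {0<..\<alpha>0})"
  have "D > 0"
    unfolding D_def by (rule tendsto_setdist_Cm_cball(2)[OF \<alpha>0])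
  assume "\<not> c \<le> sqrt (2 * negpart (W am)) / Sup ((\<lambda>\<alpha>. setdist (Cm \<alpha>) (cball ap r0)) ` {0<..\<alpha>0})"
  then have "sqrt (2 * negpart (W am)) / D < c"
    by (simp add: D_def)
  then have "sqrt (2 * negpart (W am)) < c * D"
    using \<open>D > 0\<close> by (simp add: pos_divide_less_eq)
  then have "sqrt (2 * negpart (W am)) / c < D"
    using c by (simp add: pos_divide_less_eq mult.commute)
  then have "\<exists>\<alpha>\<in>{0<..\<alpha>0}. \<alpha> < m \<and> sqrt (2 * negpart (W am)) / c < setdist (Cm \<alpha>) (cball ap r0)"
    unfolding D_def by (rule tendsto_setdist_Cm_cball(3)[OF \<alpha>0])
  then obtain \<alpha> where \<alpha>: "0 < \<alpha>" "\<alpha> \<le> \<alpha>0" "\<alpha> < m"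
    and far: "sqrt (2 * negpart (W am)) / c < setdist (Cm \<alpha>) (cball ap r0)"
    by auto
  have "0 \<le> energy W c V V'" if "H1loc V V'" "V \<in> XL am ap r0 L" for V V'
  proof (rule energy_nonneg_if_fast[OF that c W_min])
    show "\<forall>u\<in>cball ap r0. W u \<ge> 0"
      using nonneg_near_ap by blast
    show "closed (Cm \<alpha>)"
      using Cm_Cp_compact[OF \<alpha>(1,2)] compact_imp_closed by blast
    show "\<And>u. W u < 0 \<Longrightarrow> u \<in> Cm \<alpha>"
      using negative_subset_Cm \<alpha>(1,2) by blast
    show "\<And>u v. u \<in> Cm \<alpha> \<Longrightarrow> v \<in> cball ap r0 \<Longrightarrow> setdist (Cm \<alpha>) (cball ap r0) \<le> dist u v"
      by (rule setdist_le_dist)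
    show "sqrt (2 * negpart (W am)) \<le> c * setdist (Cm \<alpha>) (cball ap r0)"
      using far c by (simp add: field_simps)
  qed
  then have "0 \<le> inf_energy W am ap r0 c L"
    unfolding inf_energy_def by (auto intro!: Inf_greatest)
  with neg show False
    by simp
qed

theorem mainTheorem14:
  fixes W :: "'a::euclidean_space \<Rightarrow> real"
    and am ap :: 'a
    and Cm Cp :: "real \<Rightarrow> 'a set"
    and \<alpha>0 c0 R0 r0 :: real
  assumes W_C2: "C2 W"
    and min_am: "\<forall>u. W am \<le> W u"
    and min_ap: "\<exists>\<epsilon>>0. \<forall>u\<in>ball ap \<epsilon>. W ap \<le> W u"
    and W_am: "W am < 0" and W_ap: "W ap = 0"
    and \<alpha>0_pos: "\<alpha>0 > 0"
    and sets: "\<forall>\<alpha>\<in>{0<..\<alpha>0}.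
        W -` {\<alpha>} = frontier (Cm \<alpha>) \<union> frontier (Cp \<alpha>)
      \<and> {u. W u \<le> \<alpha>} = Cm \<alpha> \<union> Cp \<alpha>
      \<and> Cm \<alpha> \<inter> Cp \<alpha> = {}
      \<and> compact (Cm \<alpha>) \<and> compact (Cp \<alpha>) \<and> convex (Cm \<alpha>) \<and> convex (Cp \<alpha>)
      \<and> C2_boundary (Cm \<alpha>) \<and> C2_boundary (Cp \<alpha>)
      \<and> am \<in> Cm \<alpha> \<and> ap \<in> Cp \<alpha>"
    and c0_pos: "c0 > 0"
    and normal: "\<forall>p n. outward_normal (connected_component_set {u. W u \<le> 0} am) p n
                    \<longrightarrow> grad W p \<bullet> n \<ge> c0"
    and convex0: "\<forall>p\<in>frontier (connected_component_set {u. W u \<le> 0} am).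
                    \<forall>v. v \<bullet> hess W p v \<ge> c0 * (norm v)\<^sup>2"
    and radial_m: "\<forall>\<xi> r. norm \<xi> = 1 \<and> r > 0 \<and> am + r *\<^sub>R \<xi> \<in> Cm \<alpha>0
                    \<longrightarrow> deriv (\<lambda>s. W (am + s *\<^sub>R \<xi>)) r > 0"
    and R0_pos: "R0 > 0"
    and h: "\<forall>\<xi> r. norm \<xi> = 1 \<and> r \<in> {0<..<R0} \<longrightarrow>
              deriv (\<lambda>s. W (am + s *\<^sub>R \<xi>)) r > 0 \<and> deriv (\<lambda>s. W (ap + s *\<^sub>R \<xi>)) r > 0"
    and r0: "0 < r0" "r0 < R0"
    and r0_p: "\<forall>u\<in>cball ap r0. W u \<ge> 0"
    and r0_m: "\<forall>u\<in>cball am r0. W u < 0"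
  defines "C \<equiv> {c::real. c > 0 \<and> (\<exists>L\<ge>1. inf_energy W am ap r0 c L < 0)}"
    and "d0 \<equiv> Lim (at_right 0) (\<lambda>\<alpha>. setdist (Cm \<alpha>) (cball ap r0))"
  shows "open C \<and> C \<noteq> {} \<and> bdd_above C \<and> Sup C \<le> sqrt (2 * negpart (W am)) / d0"
proof -
  have W: "continuous_on UNIV W"
    by (rule C2_imp_continuous[OF W_C2])
  have "deriv (\<lambda>s. W (ap + s *\<^sub>R \<xi>)) s > 0" if "norm \<xi> = 1" "0 < s" "s < R0" for \<xi> s
    using h that by simp
  then obtain m where m: "W ap < m" "\<forall>u\<in>sphere ap r0. m \<le> W u"
    using sphere_lower_bound_gt_centre[OF C2_imp_differentiable[OF W_C2] r0] by blast
  interpret separated_wells W am ap Cm Cp \<alpha>0 r0 m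
    using sets m W_am W_ap r0 r0_p by unfold_locales auto
  define D where "D = Sup ((\<lambda>\<alpha>. setdist (Cm \<alpha>) (cball ap r0)) ` {0<..\<alpha>0})"
  have "d0 = D"
    unfolding d0_def D_def using tendsto_setdist_Cm_cball(1)[OF \<alpha>0_pos] by (rule tendsto_Lim[rotated]) simp
  have upper: "c \<le> sqrt (2 * negpart (W am)) / D" if "c \<in> C" for c
    using that speed_le_if_inf_energy_neg[OF min_am \<alpha>0_pos] unfolding C_def D_def by blast
  have "open C"
    by (rule open_if_eventually_mem)
      (use eventually_inf_energy_neg[OF W _ min_am r0_p] in \<open>auto simp: C_def\<close>)
  moreover obtain c where "c > 0" "inf_energy W am ap r0 c 1 < 0"
    using exists_negative_energy[OF W W_am W_ap less_imp_le[OF r0(1)]] by blast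
  then have "C \<noteq> {}"
    unfolding C_def by blast
  moreover have "bdd_above C"
    using upper by (rule bdd_aboveI)
  ultimately show ?thesis
    using upper \<open>d0 = D\<close> by (auto intro: cSup_least)
qed

end
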